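(* Let $\Phi$ be a convex growth function and $\alpha > -1$. Then there exists $C=C_{\alpha}>0$ such that for any $f\in A^{\Phi}_{\alpha}(\mathbb{C}_+)$ and any $z= x+iy \in \mathbb{C}_+$, $$|f(z)|\leq C\, \Phi^{-1}\left(\frac{1}{ y^{\alpha+2}}\right)\|f\|_{\Phi,\alpha}^{lux}.$$
   Context: $\mathbb{C}_+=\{x+iy: y>0\}$. A growth function is a continuous nondecreasing function from $[0,\infty)$ onto $[0,\infty)$; $\Phi^{-1}$ is its inverse. $dV_\alpha(x+iy)=y^\alpha dxdy$; $A^\Phi_\alpha(\mathbb{C}_+)$ is the space of holomorphic $f$ on $\mathbb{C}_+$ with $\int\Phi(|f|)dV_\alpha<\infty$, and $\|f\|^{lux}_{\Phi,\alpha}=\inf\{\lambda>0:\int_{\mathbb{C}_+}\Phi(|f|/\lambda)dV_\alpha\le1\}$. *)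

theory Defs
  imports "HOL-Analysis.Analysis"
begin

definition upper_half_plane :: "complex set" where
  "upper_half_plane = {z. Im z > 0}"

definition growth_function :: "(real \<Rightarrow> real) \<Rightarrow> bool" where
  "growth_function \<Phi> \<longleftrightarrow>
     continuous_on {0..} \<Phi> \<and> mono_on {0..} \<Phi> \<and> \<Phi> ` {0..} = {0..}"

text \<open>Inverse of a growth function (generalised inverse; for t > 0 and convex
  growth functions this is the genuine inverse).\<close>
definition growth_inv :: "(real \<Rightarrow> real) \<Rightarrow> real \<Rightarrow> real" where
  "growth_inv \<Phi> t = Inf {s. 0 \<le> s \<and> t \<le> \<Phi> s}"

definition orlicz_modular :: "(real \<Rightarrow> real) \<Rightarrow> real \<Rightarrow> (complex \<Rightarrow> complex) \<Rightarrow> ennreal" where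
  "orlicz_modular \<Phi> \<alpha> f =
     (\<integral>\<^sup>+ z. indicator upper_half_plane z * ennreal (\<Phi> (cmod (f z)) * (Im z) powr \<alpha>) \<partial>lborel)"

definition bergman_orlicz :: "(real \<Rightarrow> real) \<Rightarrow> real \<Rightarrow> (complex \<Rightarrow> complex) set" where
  "bergman_orlicz \<Phi> \<alpha> =
     {f. f holomorphic_on upper_half_plane \<and> orlicz_modular \<Phi> \<alpha> f < \<infinity>}"

definition lux_norm :: "(real \<Rightarrow> real) \<Rightarrow> real \<Rightarrow> (complex \<Rightarrow> complex) \<Rightarrow> real" where
  "lux_norm \<Phi> \<alpha> f = Inf {r. r > 0 \<and> orlicz_modular \<Phi> \<alpha> (\<lambda>z. f z / of_real r) \<le> 1}"

end

(*
  Cauchy's formula on a rectangle bounds |F z| by the integrals of |F| along its four sides. By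
  Fubini, each of four strips around z contains a line along which that integral is at most its
  average, so |F z| <= 8 / (pi r^2) times the integral of |F| over the square of half side r
  centred at z. Jensen's inequality for the convex Phi then gives
  Phi (pi / 32 * |F z|) <= the average of Phi (|F|) over that square.
  On the square of half side Im z / 2 the weight (Im w) powr alpha is comparable to
  (Im z) powr alpha, so for F = f / r with modular at most 1 this bounds Phi (c |f z| / r) by
  1 / (Im z) powr (alpha + 2), where c depends only on alpha because Phi (k s) <= k Phi s for
  k <= 1. Inverting Phi and taking the infimum over r yields the Luxemburg norm.
*)
theory Submission
  imports Defs "HOL-Probability.Probability_Measure" "HOL-Complex_Analysis.Complex_Analysis"
begin

section \<open>Lebesgue measure and averages\<close>

lemma lborel_complex_eq_distr_pair:
  "(lborel :: complex measure) = distr (lborel \<Otimes>\<^sub>M lborel) borel (\<lambda>(x, y). Complex x y)"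
proof (rule lborel_eqI)
  fix l u :: complex
  assume lu: "\<And>b. b \<in> Basis \<Longrightarrow> l \<bullet> b \<le> u \<bullet> b"
  then have le: "Re l \<le> Re u" "Im l \<le> Im u"
    using lu[of 1] lu[of \<i>] by (auto simp: Basis_complex_def)
  have meas: "(\<lambda>(x, y). Complex x y) \<in> lborel \<Otimes>\<^sub>M lborel \<rightarrow>\<^sub>M borel"
    unfolding Complex_eq case_prod_beta by measurable
  have preimage: "(\<lambda>(x, y). Complex x y) -` box l u \<inter> space (lborel \<Otimes>\<^sub>M lborel)
      = {Re l<..<Re u} \<times> {Im l<..<Im u}"
    by (auto simp: box_def Basis_complex_def space_pair_measure)
  have "emeasure (distr (lborel \<Otimes>\<^sub>M lborel) borel (\<lambda>(x, y). Complex x y)) (box l u)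
      = emeasure (lborel \<Otimes>\<^sub>M lborel) ({Re l<..<Re u} \<times> {Im l<..<Im u})"
    by (subst emeasure_distr[OF meas]) (auto simp: preimage)
  also have "\<dots> = (\<Prod>b\<in>Basis. (u - l) \<bullet> b)"
    using le by (simp add: lborel.emeasure_pair_measure_Times Basis_complex_def ennreal_mult)
  finally show "emeasure (distr (lborel \<Otimes>\<^sub>M lborel) borel (\<lambda>(x, y). Complex x y)) (box l u)
      = (\<Prod>b\<in>Basis. (u - l) \<bullet> b)" .
qed simp

lemma nn_integral_complex_Fubini:
  fixes G :: "complex \<Rightarrow> ennreal"
  assumes G[measurable]: "G \<in> borel_measurable borel"
  shows "(\<integral>\<^sup>+w. G w \<partial>lborel) = (\<integral>\<^sup>+y. (\<integral>\<^sup>+x. G (Complex x y) \<partial>lborel) \<partial>lborel)"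
    and "(\<integral>\<^sup>+w. G w \<partial>lborel) = (\<integral>\<^sup>+x. (\<integral>\<^sup>+y. G (Complex x y) \<partial>lborel) \<partial>lborel)"
proof -
  have meas: "(\<lambda>(x, y). Complex x y) \<in> lborel \<Otimes>\<^sub>M lborel \<rightarrow>\<^sub>M borel"
    unfolding Complex_eq case_prod_beta by measurable
  have G_pair: "(\<lambda>p. G (Complex (fst p) (snd p))) \<in> borel_measurable (lborel \<Otimes>\<^sub>M lborel)"
    using measurable_comp[OF meas G] by (simp add: o_def case_prod_beta)
  have eq: "(\<integral>\<^sup>+w. G w \<partial>lborel) = (\<integral>\<^sup>+p. G (Complex (fst p) (snd p)) \<partial>(lborel \<Otimes>\<^sub>M lborel))"
    by (subst lborel_complex_eq_distr_pair, subst nn_integral_distr[OF meas]) (auto simp: case_prod_beta)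
  show "(\<integral>\<^sup>+w. G w \<partial>lborel) = (\<integral>\<^sup>+y. (\<integral>\<^sup>+x. G (Complex x y) \<partial>lborel) \<partial>lborel)"
    unfolding eq using lborel_pair.nn_integral_snd[OF G_pair] by simp
  show "(\<integral>\<^sup>+w. G w \<partial>lborel) = (\<integral>\<^sup>+x. (\<integral>\<^sup>+y. G (Complex x y) \<partial>lborel) \<partial>lborel)"
    unfolding eq using lborel.nn_integral_fst[OF G_pair] by simp
qed

lemma borel_measurable_indicator_mult_ennreal:
  fixes f :: "'a::topological_space \<Rightarrow> real"
  assumes "S \<in> sets borel" "continuous_on S f"
  shows "(\<lambda>x. indicator S x * ennreal (f x)) \<in> borel_measurable borel"
proof -
  have [measurable]: "(\<lambda>x. indicator S x *\<^sub>R f x) \<in> borel_measurable borel"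
    using assms by (rule borel_measurable_continuous_on_indicator)
  have "(\<lambda>x. indicator S x * ennreal (f x)) = (\<lambda>x. ennreal (indicator S x *\<^sub>R f x))"
    by (auto simp: fun_eq_iff split: split_indicator)
  then show ?thesis
    by (simp only:) measurable
qed

lemma nn_integral_indicator_eq_measure_mult_integral:
  fixes Z :: "'a \<Rightarrow> real"
  assumes "Q \<in> sets M" "emeasure M Q = ennreal \<mu>" "\<mu> > 0"
    and "integrable (uniform_measure M Q) (\<lambda>w. indicator Q w * Z w)" "\<And>w. w \<in> Q \<Longrightarrow> 0 \<le> Z w"
    and "(\<lambda>w. indicator Q w * Z w) \<in> borel_measurable M"
  shows "(\<integral>\<^sup>+w. indicator Q w * ennreal (Z w) \<partial>M)
           = ennreal (\<mu> * integral\<^sup>L (uniform_measure M Q) (\<lambda>w. indicator Q w * Z w))"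
proof -
  have nonneg: "0 \<le> indicator Q w * Z w" for w
    using assms(5) by (simp add: indicator_def)
  have "ennreal (integral\<^sup>L (uniform_measure M Q) (\<lambda>w. indicator Q w * Z w))
      = (\<integral>\<^sup>+w. ennreal (indicator Q w * Z w) \<partial>uniform_measure M Q)"
    using assms(4) nonneg by (simp add: nn_integral_eq_integral)
  also have "\<dots> = (\<integral>\<^sup>+w. ennreal (indicator Q w * Z w) * indicator Q w \<partial>M) / emeasure M Q"
    using assms(1,6) by (intro nn_integral_uniform_measure) auto
  also have "(\<integral>\<^sup>+w. ennreal (indicator Q w * Z w) * indicator Q w \<partial>M) = (\<integral>\<^sup>+w. indicator Q w * ennreal (Z w) \<partial>M)"
    by (intro nn_integral_cong) (simp add: indicator_def)
  finally show ?thesis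
    using assms(2,3) nonneg
    by (simp add: ennreal_mult ennreal_times_divide mult.commute[of "ennreal \<mu>"] ennreal_mult_divide_eq
        Bochner_Integration.integral_nonneg)
qed

lemma integrable_uniform_measure_indicator_mult:
  fixes X :: "'a::euclidean_space \<Rightarrow> real"
  assumes "compact Q" "emeasure lborel Q \<noteq> 0" "continuous_on Q X"
  shows "integrable (uniform_measure lborel Q) (\<lambda>w. indicator Q w * X w)"
proof -
  have Q: "Q \<in> sets borel"
    using assms(1) by (simp add: borel_compact)
  interpret U: prob_space "uniform_measure lborel Q"
    using assms(1,2) Q emeasure_bounded_finite[OF compact_imp_bounded[OF assms(1)]]
    by (intro prob_space_uniform_measure) auto
  obtain B where B: "\<And>w. w \<in> Q \<Longrightarrow> norm (X w) \<le> B" "B > 0"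
    using compact_imp_bounded[OF compact_continuous_image[OF assms(3,1)]] by (auto simp: bounded_pos)
  have "(\<lambda>w. indicator Q w * X w) \<in> borel_measurable borel"
    using borel_measurable_continuous_on_indicator[OF Q assms(3)] by simp
  then show ?thesis
    using B by (intro U.integrable_const_bound[where B=B]) (auto simp: indicator_def)
qed

lemma integral_le_of_nn_integral_le:
  fixes \<phi> :: "real \<Rightarrow> real"
  assumes "continuous_on {a..b} \<phi>" and "\<And>x. x \<in> {a..b} \<Longrightarrow> 0 \<le> \<phi> x"
    and "\<And>x. x \<in> {a..b} \<Longrightarrow> ennreal (\<phi> x) \<le> \<psi> x"
    and "(\<integral>\<^sup>+x. \<psi> x \<partial>lborel) \<le> ennreal e" and "e \<ge> 0"
  shows "integral {a..b} \<phi> \<le> e"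
proof -
  have "ennreal (integral {a..b} \<phi>) = (\<integral>\<^sup>+x. ennreal (\<phi> x) * indicator {a..b} x \<partial>lborel)"
    using nn_integral_has_integral_lebesgue'[OF assms(2) integrable_integral[OF
          integrable_continuous_real[OF assms(1)]]]
    by simp
  also have "\<dots> \<le> (\<integral>\<^sup>+x. \<psi> x \<partial>lborel)"
    by (intro nn_integral_mono) (auto simp: assms(3) split: split_indicator)
  also have "\<dots> \<le> ennreal e"
    by (rule assms(4))
  finally show ?thesis
    using assms(5) by (simp add: ennreal_le_iff)
qed

lemma exists_le_average:
  fixes \<phi> :: "real \<Rightarrow> ennreal"
  assumes "(\<integral>\<^sup>+y. indicator {p..q} y * \<phi> y \<partial>lborel) \<le> ennreal m"
    and "p < q" and "\<epsilon> > 0" and "m \<ge> 0"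
  shows "\<exists>y\<in>{p..q}. \<phi> y \<le> ennreal (m / (q - p) + \<epsilon>)"
proof (rule ccontr)
  define L where "L = q - p"
  have L: "L > 0" using assms(2) by (simp add: L_def)
  assume "\<not> ?thesis"
  then have gt: "\<And>y. y \<in> {p..q} \<Longrightarrow> ennreal (m / L + \<epsilon>) < \<phi> y"
    by (auto simp: not_le L_def)
  have "ennreal ((m / L + \<epsilon>) * L) = (\<integral>\<^sup>+y. ennreal (m / L + \<epsilon>) * indicator {p..q} y \<partial>lborel)"
    using assms L by (simp add: L_def nn_integral_cmult_indicator ennreal_mult)
  also have "\<dots> \<le> (\<integral>\<^sup>+y. indicator {p..q} y * \<phi> y \<partial>lborel)"
    by (intro nn_integral_mono) (auto simp: gt less_imp_le split: split_indicator)
  also have "\<dots> \<le> ennreal m"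
    by (rule assms(1))
  finally have "(m / L + \<epsilon>) * L \<le> m"
    using assms(4) by (simp add: ennreal_le_iff)
  moreover have "(m / L + \<epsilon>) * L = m + \<epsilon> * L"
    using L by (simp add: field_simps)
  ultimately show False
    using mult_pos_pos[OF assms(3) L] by linarith
qed

definition square :: "complex \<Rightarrow> real \<Rightarrow> complex set" where
  "square z r = cbox (Complex (Re z - r) (Im z - r)) (Complex (Re z + r) (Im z + r))"

lemma mem_square_iff:
  "w \<in> square z r \<longleftrightarrow> \<bar>Re w - Re z\<bar> \<le> r \<and> \<bar>Im w - Im z\<bar> \<le> r"
  by (auto simp: square_def in_cbox_complex_iff abs_le_iff)

lemma compact_square: "compact (square z r)"
  by (simp add: square_def)

lemma emeasure_square:
  assumes "r \<ge> 0"
  shows "emeasure lborel (square z r) = ennreal (4 * r\<^sup>2)"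
  using assms by (simp add: square_def emeasure_lborel_cbox_eq Basis_complex_def power2_eq_square
      ennreal_mult[symmetric])

section \<open>Sub-mean-value inequality on squares\<close>

lemma contour_integral_linepath_same_Im:
  assumes "a < b"
  shows "contour_integral (linepath (Complex a c) (Complex b c)) f =
           integral {a..b} (\<lambda>x. f (Complex x c))"
proof -
  have "contour_integral (linepath (Complex a c) (Complex b c)) f =
         (Complex b c - Complex a c) * integral {0..1} (\<lambda>t. f (linepath (Complex a c) (Complex b c) t))"
    by (simp add: contour_integral_integral)
  also have "Complex b c - Complex a c = of_real (b - a)"
    by (simp add: complex_eq_iff)
  also have "integral {0..1} (\<lambda>t. f (linepath (Complex a c) (Complex b c) t)) =
             integral {0..1} (\<lambda>t. f (Complex (linepath a b t) c))"
    by (intro integral_cong arg_cong[where f=f]) (simp add: linepath_def complex_eq_iff algebra_simps)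
  also have "\<dots> = integral {0..(b - a) / (b - a)} (\<lambda>t. f (Complex (a + (b - a) * t) c))"
    using assms by (simp add: algebra_simps linepath_def)
  also have "{0..(b - a) / (b - a)} = (\<lambda>x. x / (b - a)) ` {0..b - a}"
    using assms by simp
  also have "integral \<dots> (\<lambda>t. f (Complex (a + (b - a) * t) c)) =
             integral {a - a..b - a} (\<lambda>x. f (Complex (x + a) c)) / of_real (b - a)"
    using assms by (subst integral_stretch_real) (auto simp: scaleR_conv_of_real add_ac)
  also have "\<dots> = integral {a..b} (\<lambda>x. f (Complex x c)) / of_real (b - a)"
    by (subst integral_shift_real_ivl) (rule refl)
  finally show ?thesis
    using assms by simp
qed

lemma contour_integral_rectpath:
  assumes "a < b" "c < d"
    and g: "continuous_on (path_image (rectpath (Complex a c) (Complex b d))) g"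
  shows "contour_integral (rectpath (Complex a c) (Complex b d)) g =
           integral {a..b} (\<lambda>x. g (Complex x c)) + \<i> * integral {c..d} (\<lambda>y. g (Complex b y))
         - integral {a..b} (\<lambda>x. g (Complex x d)) - \<i> * integral {c..d} (\<lambda>y. g (Complex a y))"
proof -
  define A1 A2 A3 A4 where "A1 = Complex a c" "A2 = Complex b c" "A3 = Complex b d" "A4 = Complex a d"
  have rectpath_eq: "rectpath A1 A3 = linepath A1 A2 +++ linepath A2 A3 +++ linepath A3 A4 +++ linepath A4 A1"
    by (simp add: rectpath_def Let_def A1_A2_A3_A4_def)
  have "path_image (rectpath A1 A3)
      = closed_segment A1 A2 \<union> closed_segment A2 A3 \<union> closed_segment A3 A4 \<union> closed_segment A4 A1"
    unfolding rectpath_eq by (simp add: path_image_join Un_assoc)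
  then have cont: "continuous_on (closed_segment A1 A2) g" "continuous_on (closed_segment A2 A3) g"
      "continuous_on (closed_segment A3 A4) g" "continuous_on (closed_segment A1 A4) g"
    using g unfolding A1_A2_A3_A4_def[symmetric]
    by (auto intro: continuous_on_subset simp: closed_segment_commute[of A1 A4])
  have "contour_integral (rectpath A1 A3) g = contour_integral (linepath A1 A2) g
      + contour_integral (linepath A2 A3) g + contour_integral (linepath A3 A4) g
      + contour_integral (linepath A4 A1) g"
    unfolding rectpath_eq using cont
    by (simp add: contour_integrable_continuous_linepath contour_integrable_joinI valid_path_join
        closed_segment_commute[of A1 A4] add_ac)
  also have "contour_integral (linepath A3 A4) g = - contour_integral (linepath A4 A3) g"
    using cont(3) by (intro contour_integral_reverse_linepath)
  also have "contour_integral (linepath A4 A1) g = - contour_integral (linepath A1 A4) g"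
    using cont(4) by (intro contour_integral_reverse_linepath) (simp add: closed_segment_commute)
  finally show ?thesis
    using assms(1,2) unfolding A1_A2_A3_A4_def
    by (simp add: contour_integral_linepath_same_Im contour_integral_linepath_same_Re)
qed

lemma norm_integral_divide_le:
  fixes g p :: "real \<Rightarrow> complex"
  assumes "continuous_on {a..b} g" "continuous_on {a..b} p"
    and "h > 0" "\<And>t. t \<in> {a..b} \<Longrightarrow> h \<le> cmod (p t - z)"
  shows "norm (integral {a..b} (\<lambda>t. g t / (p t - z))) \<le> integral {a..b} (\<lambda>t. cmod (g t)) / h"
proof -
  have bound: "norm (g t / (p t - z)) \<le> cmod (g t) / h" if "t \<in> {a..b}" for t
    using assms(3) assms(4)[OF that] by (simp add: norm_divide frac_le)
  have "p t - z \<noteq> 0" if "t \<in> {a..b}" for t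
    using assms(3) assms(4)[OF that] by auto
  then have "continuous_on {a..b} (\<lambda>t. g t / (p t - z))"
    using assms(1,2) by (intro continuous_intros) auto
  moreover have "continuous_on {a..b} (\<lambda>t. cmod (g t) / h)"
    using assms(1,3) by (intro continuous_intros) auto
  ultimately have "norm (integral {a..b} (\<lambda>t. g t / (p t - z))) \<le> integral {a..b} (\<lambda>t. cmod (g t) / h)"
    using bound by (intro integral_norm_bound_integral integrable_continuous_real)
  then show ?thesis
    by simp
qed

lemma Cauchy_integral_formula_rectpath:
  assumes "F holomorphic_on cbox a b" and z: "z \<in> box a b"
  shows "contour_integral (rectpath a b) (\<lambda>w. F w / (w - z)) = 2 * pi * \<i> * F z"
proof -
  have "Re a \<le> Re b" "Im a \<le> Im b"
    using z by (auto simp: in_box_complex_iff)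
  then have "path_image (rectpath a b) \<subseteq> cbox a b - {z}"
    using path_image_rectpath_cbox_minus_box z by auto
  then have "((\<lambda>w. F w / (w - z)) has_contour_integral (2 * pi * \<i> * winding_number (rectpath a b) z * F z))
      (rectpath a b)"
    using assms by (intro Cauchy_integral_formula_convex_simple[where S="cbox a b"]) (auto simp: interior_cbox)
  then show ?thesis
    using winding_number_rectpath[OF z] contour_integral_unique by auto
qed

lemma norm_le_rectangle_boundary_integral:
  fixes F :: "complex \<Rightarrow> complex"
  assumes holo: "F holomorphic_on cbox (Complex a c) (Complex b d)"
    and h: "h > 0" "a + h \<le> Re z" "Re z + h \<le> b" "c + h \<le> Im z" "Im z + h \<le> d"
  shows "2 * pi * cmod (F z) * h \<le> integral {a..b} (\<lambda>x. cmod (F (Complex x c)))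
        + integral {c..d} (\<lambda>y. cmod (F (Complex b y)))
        + integral {a..b} (\<lambda>x. cmod (F (Complex x d)))
        + integral {c..d} (\<lambda>y. cmod (F (Complex a y)))"
proof -
  define K where "K = cbox (Complex a c) (Complex b d)"
  define g where "g w = F w / (w - z)" for w
  have z: "z \<in> box (Complex a c) (Complex b d)"
    using h by (auto simp: in_box_complex_iff)
  have ab: "a < b" "c < d"
    using h by auto
  have path_K: "path_image (rectpath (Complex a c) (Complex b d)) \<subseteq> K - {z}"
    using path_image_rectpath_cbox_minus_box[of "Complex a c" "Complex b d"] z ab
    by (auto simp: K_def)
  have contF: "continuous_on K F"
    using holo holomorphic_on_imp_continuous_on by (simp add: K_def)
  have cont_g: "continuous_on (path_image (rectpath (Complex a c) (Complex b d))) g"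
    unfolding g_def using path_K by (intro continuous_intros continuous_on_subset[OF contF]) auto
  have in_K: "Complex x y \<in> K \<longleftrightarrow> x \<in> {a..b} \<and> y \<in> {c..d}" for x y
    by (auto simp: K_def in_cbox_complex_iff)
  have horiz: "norm (integral {a..b} (\<lambda>x. g (Complex x e))) \<le> integral {a..b} (\<lambda>x. cmod (F (Complex x e))) / h"
    if "e = c \<or> e = d" for e
    unfolding g_def using that h
    by (intro norm_integral_divide_le continuous_on_compose2[OF contF] continuous_intros)
      (auto simp: in_K intro: order_trans[OF _ abs_Im_le_cmod])
  have vert: "norm (integral {c..d} (\<lambda>y. g (Complex e y))) \<le> integral {c..d} (\<lambda>y. cmod (F (Complex e y))) / h"
    if "e = a \<or> e = b" for e
    unfolding g_def using that h
    by (intro norm_integral_divide_le continuous_on_compose2[OF contF] continuous_intros)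
      (auto simp: in_K intro: order_trans[OF _ abs_Re_le_cmod])
  have triangle: "norm (p + \<i> * q - r - \<i> * t) \<le> norm p + norm q + norm r + norm t" for p q r t
    using norm_triangle_ineq4[of "p + \<i> * q - r" "\<i> * t"] norm_triangle_ineq4[of "p + \<i> * q" r]
      norm_triangle_ineq[of p "\<i> * q"]
    by (simp add: norm_mult)
  have "2 * pi * cmod (F z) = norm (contour_integral (rectpath (Complex a c) (Complex b d)) g)"
    using Cauchy_integral_formula_rectpath[OF holo z] by (simp add: g_def[abs_def] norm_mult)
  also have "\<dots> \<le> norm (integral {a..b} (\<lambda>x. g (Complex x c))) + norm (integral {c..d} (\<lambda>y. g (Complex b y)))
      + norm (integral {a..b} (\<lambda>x. g (Complex x d))) + norm (integral {c..d} (\<lambda>y. g (Complex a y)))"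
    unfolding contour_integral_rectpath[OF ab cont_g] by (rule triangle)
  also have "\<dots> \<le> (integral {a..b} (\<lambda>x. cmod (F (Complex x c))) + integral {c..d} (\<lambda>y. cmod (F (Complex b y)))
      + integral {a..b} (\<lambda>x. cmod (F (Complex x d))) + integral {c..d} (\<lambda>y. cmod (F (Complex a y)))) / h"
    using horiz vert by (simp add: add_divide_distrib add_mono)
  finally show ?thesis
    using h(1) by (simp add: pos_le_divide_eq)
qed

lemma exists_lines_le_average:
  fixes G :: "complex \<Rightarrow> ennreal"
  assumes G: "G \<in> borel_measurable borel" and total: "(\<integral>\<^sup>+w. G w \<partial>lborel) \<le> ennreal m"
    and "m \<ge> 0" "h > 0" "\<epsilon> > 0"
  shows "\<exists>y\<in>{p..p + h}. (\<integral>\<^sup>+x. G (Complex x y) \<partial>lborel) \<le> ennreal (m / h + \<epsilon>)"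
    and "\<exists>x\<in>{p..p + h}. (\<integral>\<^sup>+y. G (Complex x y) \<partial>lborel) \<le> ennreal (m / h + \<epsilon>)"
proof -
  have "(\<integral>\<^sup>+y. indicator {p..p + h} y * (\<integral>\<^sup>+x. G (Complex x y) \<partial>lborel) \<partial>lborel) \<le> ennreal m"
    by (rule order_trans[OF nn_integral_mono total[unfolded nn_integral_complex_Fubini(1)[OF G]]])
      (simp split: split_indicator)
  from exists_le_average[OF this] assms(3-5)
  show "\<exists>y\<in>{p..p + h}. (\<integral>\<^sup>+x. G (Complex x y) \<partial>lborel) \<le> ennreal (m / h + \<epsilon>)"
    by simp
  have "(\<integral>\<^sup>+x. indicator {p..p + h} x * (\<integral>\<^sup>+y. G (Complex x y) \<partial>lborel) \<partial>lborel) \<le> ennreal m"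
    by (rule order_trans[OF nn_integral_mono total[unfolded nn_integral_complex_Fubini(2)[OF G]]])
      (simp split: split_indicator)
  from exists_le_average[OF this] assms(3-5)
  show "\<exists>x\<in>{p..p + h}. (\<integral>\<^sup>+y. G (Complex x y) \<partial>lborel) \<le> ennreal (m / h + \<epsilon>)"
    by simp
qed

text \<open>The sides of the rectangle are lines in the four strips between the squares of half side
  \<open>h\<close> and \<open>2 h\<close> that carry at most the average of the area integral, so \<open>z\<close> keeps
  distance \<open>h\<close> from the boundary.\<close>
lemma norm_le_square_integral_eps:
  fixes F :: "complex \<Rightarrow> complex"
  assumes holo: "F holomorphic_on square z (2 * h)" and h: "h > 0"
    and M: "(\<integral>\<^sup>+w. indicator (square z (2 * h)) w * ennreal (cmod (F w)) \<partial>lborel) \<le> ennreal m"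
    and m: "m \<ge> 0" and \<epsilon>: "\<epsilon> > 0"
  shows "2 * pi * cmod (F z) * h \<le> 4 * (m / h + \<epsilon>)"
proof -
  define G where "G w = indicator (square z (2 * h)) w * ennreal (cmod (F w))" for w
  have contF: "continuous_on (square z (2 * h)) F"
    using holo holomorphic_on_imp_continuous_on by blast
  have G_meas: "G \<in> borel_measurable borel"
    unfolding G_def using contF compact_square[of z "2 * h"]
    by (intro borel_measurable_indicator_mult_ennreal continuous_on_norm) (auto intro: borel_compact)
  note lines = exists_lines_le_average[OF G_meas M[folded G_def] m h \<epsilon>]
  obtain c where c: "c \<in> {Im z - 2 * h..Im z - h}" "(\<integral>\<^sup>+x. G (Complex x c) \<partial>lborel) \<le> ennreal (m / h + \<epsilon>)"
    using lines(1)[of "Im z - 2 * h"] by auto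
  obtain d where d: "d \<in> {Im z + h..Im z + 2 * h}" "(\<integral>\<^sup>+x. G (Complex x d) \<partial>lborel) \<le> ennreal (m / h + \<epsilon>)"
    using lines(1)[of "Im z + h"] by (auto simp: algebra_simps)
  obtain a where a: "a \<in> {Re z - 2 * h..Re z - h}" "(\<integral>\<^sup>+y. G (Complex a y) \<partial>lborel) \<le> ennreal (m / h + \<epsilon>)"
    using lines(2)[of "Re z - 2 * h"] by auto
  obtain b where b: "b \<in> {Re z + h..Re z + 2 * h}" "(\<integral>\<^sup>+y. G (Complex b y) \<partial>lborel) \<le> ennreal (m / h + \<epsilon>)"
    using lines(2)[of "Re z + h"] by (auto simp: algebra_simps)
  have rectangle: "cbox (Complex a c) (Complex b d) \<subseteq> square z (2 * h)"
    using a b c d by (auto simp: in_cbox_complex_iff mem_square_iff abs_le_iff)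
  have side: "integral {s..t} (\<lambda>u. cmod (F (P u))) \<le> m / h + \<epsilon>"
    if "(\<integral>\<^sup>+u. G (P u) \<partial>lborel) \<le> ennreal (m / h + \<epsilon>)"
      "continuous_on {s..t} P" "P ` {s..t} \<subseteq> square z (2 * h)" for s t and P :: "real \<Rightarrow> complex"
    using that m h \<epsilon>
    by (intro integral_le_of_nn_integral_le[where \<psi>="\<lambda>u. G (P u)"] continuous_intros
        continuous_on_compose2[OF contF]) (auto simp: G_def image_subset_iff)
  have sum4: "x1 + x2 + x3 + x4 \<le> 4 * B" if "x1 \<le> B" "x2 \<le> B" "x3 \<le> B" "x4 \<le> B" for x1 x2 x3 x4 B :: real
    using that by linarith
  have "2 * pi * cmod (F z) * h \<le> integral {a..b} (\<lambda>x. cmod (F (Complex x c)))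
      + integral {c..d} (\<lambda>y. cmod (F (Complex b y))) + integral {a..b} (\<lambda>x. cmod (F (Complex x d)))
      + integral {c..d} (\<lambda>y. cmod (F (Complex a y)))"
    using a b c d h
    by (intro norm_le_rectangle_boundary_integral holomorphic_on_subset[OF holo rectangle]) auto
  also have "\<dots> \<le> 4 * (m / h + \<epsilon>)"
    using a b c d h
    by (intro sum4 side continuous_intros) (auto simp: mem_square_iff abs_le_iff)
  finally show ?thesis .
qed

lemma norm_le_square_integral:
  fixes F :: "complex \<Rightarrow> complex"
  assumes holo: "F holomorphic_on square z r" and r: "r > 0"
    and M: "(\<integral>\<^sup>+w. indicator (square z r) w * ennreal (cmod (F w)) \<partial>lborel) \<le> ennreal m"
    and m: "m \<ge> 0"
  shows "pi * r\<^sup>2 * cmod (F z) \<le> 8 * m"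
proof -
  define h where "h = r / 2"
  have h: "h > 0" "r = 2 * h"
    using r by (simp_all add: h_def)
  have "2 * pi * cmod (F z) * h \<le> 4 * m / h"
  proof (rule field_le_epsilon)
    fix e :: real
    assume "e > 0"
    then show "2 * pi * cmod (F z) * h \<le> 4 * m / h + e"
      using norm_le_square_integral_eps[of F z h m "e / 4"] holo M m h by (simp add: algebra_simps)
  qed
  then have "2 * pi * cmod (F z) * h * h \<le> 4 * m"
    using h(1) by (simp add: pos_le_divide_eq)
  then show ?thesis
    using h(2) by (simp add: power2_eq_square mult_ac)
qed

section \<open>Convex growth functions\<close>

lemma growth_function_nonneg: "growth_function \<Phi> \<Longrightarrow> 0 \<le> x \<Longrightarrow> 0 \<le> \<Phi> x"
  by (auto simp: growth_function_def)

lemma growth_function_mono: "growth_function \<Phi> \<Longrightarrow> 0 \<le> x \<Longrightarrow> x \<le> y \<Longrightarrow> \<Phi> x \<le> \<Phi> y"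
  by (auto simp: growth_function_def intro: mono_onD)

lemma growth_function_0:
  assumes "growth_function \<Phi>"
  shows "\<Phi> 0 = 0"
proof -
  obtain a where "a \<ge> 0" "\<Phi> a = 0"
    using assms by (force simp: growth_function_def)
  then show ?thesis
    using growth_function_mono[OF assms, of 0 a] growth_function_nonneg[OF assms, of 0] by simp
qed

lemma convex_on_scale_le:
  assumes "convex_on {0..} \<Phi>" "\<Phi> 0 = 0" "0 \<le> \<mu>" "\<mu> \<le> 1" "0 \<le> x"
  shows "\<Phi> (\<mu> * x) \<le> \<mu> * \<Phi> x"
  using convex_onD[OF assms(1), of \<mu> 0 x] assms(2-5) by simp

lemma convex_on_comp_max_0:
  fixes \<Phi> :: "real \<Rightarrow> real"
  assumes "mono_on {0..} \<Phi>" "convex_on {0..} \<Phi>"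
  shows "convex_on UNIV (\<lambda>x. \<Phi> (max 0 x))"
proof (rule convex_onI)
  fix t x y :: real
  assume t: "0 < t" "t < 1"
  have "(1 - t) * x + t * y \<le> (1 - t) * max 0 x + t * max 0 y"
    using t by (intro add_mono mult_left_mono) auto
  then have "\<Phi> (max 0 ((1 - t) *\<^sub>R x + t *\<^sub>R y)) \<le> \<Phi> ((1 - t) *\<^sub>R max 0 x + t *\<^sub>R max 0 y)"
    using t by (intro mono_onD[OF assms(1)]) auto
  also have "\<dots> \<le> (1 - t) * \<Phi> (max 0 x) + t * \<Phi> (max 0 y)"
    using t by (intro convex_onD[OF assms(2)]) auto
  finally show "\<Phi> (max 0 ((1 - t) *\<^sub>R x + t *\<^sub>R y)) \<le> (1 - t) * \<Phi> (max 0 x) + t * \<Phi> (max 0 y)" .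
qed simp

text \<open>Convexity is needed: a flat piece of \<open>\<Phi>\<close> at the level \<open>t\<close> would put the
  infimum defining \<open>growth_inv \<Phi> t\<close> strictly below points of the sublevel set.\<close>
lemma le_growth_inv:
  assumes gf: "growth_function \<Phi>" and cv: "convex_on {0..} \<Phi>"
    and t: "t > 0" and s: "s \<ge> 0" "\<Phi> s \<le> t"
  shows "s \<le> growth_inv \<Phi> t"
  unfolding growth_inv_def
proof (rule cInf_greatest)
  have "t \<in> \<Phi> ` {0..}"
    using gf t by (simp add: growth_function_def)
  then show "{s. 0 \<le> s \<and> t \<le> \<Phi> s} \<noteq> {}"
    by force
next
  fix s'
  assume "s' \<in> {s. 0 \<le> s \<and> t \<le> \<Phi> s}"
  then have s': "0 \<le> s'" "t \<le> \<Phi> s'"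
    by auto
  show "s \<le> s'"
  proof (rule ccontr)
    assume "\<not> s \<le> s'"
    then have lt: "s' < s" "s > 0"
      using s' by auto
    have "\<Phi> s' = \<Phi> ((s' / s) * s)"
      using lt by simp
    also have "\<dots> \<le> (s' / s) * \<Phi> s"
      using s s' lt by (intro convex_on_scale_le[OF cv growth_function_0[OF gf]]) auto
    also have "\<dots> \<le> (s' / s) * t"
      using s s' lt by (intro mult_left_mono) auto
    also have "\<dots> < t"
      using lt t s' by (simp add: divide_less_eq)
    finally show False
      using s' by simp
  qed
qed

lemma growth_inv_nonneg:
  assumes "growth_function \<Phi>" "t \<ge> 0"
  shows "growth_inv \<Phi> t \<ge> 0"
  unfolding growth_inv_def
proof (rule cInf_greatest)
  have "t \<in> \<Phi> ` {0..}"
    using assms by (simp add: growth_function_def)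
  then show "{s. 0 \<le> s \<and> t \<le> \<Phi> s} \<noteq> {}"
    by force
qed auto

lemma (in prob_space) growth_function_Jensen:
  fixes \<Phi> :: "real \<Rightarrow> real"
  assumes gf: "growth_function \<Phi>" and cv: "convex_on {0..} \<Phi>"
    and Y: "integrable M Y" "\<And>w. 0 \<le> Y w" and \<Phi>Y: "integrable M (\<lambda>w. \<Phi> (Y w))"
  shows "\<Phi> (expectation Y) \<le> expectation (\<lambda>w. \<Phi> (Y w))"
proof -
  have "\<Phi> (max 0 (expectation Y)) \<le> expectation (\<lambda>w. \<Phi> (max 0 (Y w)))"
    using convex_on_comp_max_0[OF _ cv] gf Y \<Phi>Y
    by (intro jensens_inequality[where I=UNIV]) (auto simp: growth_function_def)
  moreover have "expectation Y \<ge> 0"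
    using Y(2) by (simp add: Bochner_Integration.integral_nonneg)
  ultimately show ?thesis
    using Y(2) by simp
qed

lemma Jensen_growth_function_set_nn_integral:
  fixes X :: "'a::euclidean_space \<Rightarrow> real"
  assumes gf: "growth_function \<Phi>" and cv: "convex_on {0..} \<Phi>"
    and Q: "compact Q" "emeasure lborel Q = ennreal \<mu>" "\<mu> > 0"
    and X: "continuous_on Q X" "\<And>w. w \<in> Q \<Longrightarrow> 0 \<le> X w"
  obtains E where "E \<ge> 0"
    "(\<integral>\<^sup>+w. indicator Q w * ennreal (X w) \<partial>lborel) = ennreal (\<mu> * E)"
    "ennreal (\<mu> * \<Phi> E) \<le> (\<integral>\<^sup>+w. indicator Q w * ennreal (\<Phi> (X w)) \<partial>lborel)"
proof -
  define U where "U = uniform_measure lborel Q"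
  have Q_sets: "Q \<in> sets borel"
    using Q(1) by (simp add: borel_compact)
  interpret U: prob_space U
    unfolding U_def using Q Q_sets by (intro prob_space_uniform_measure) auto
  have "continuous_on {0..} \<Phi>"
    using gf by (simp add: growth_function_def)
  then have \<Phi>X: "continuous_on Q (\<lambda>w. \<Phi> (X w))"
    using X(1) by (rule continuous_on_compose2) (use X(2) in auto)
  have U_nonzero: "emeasure lborel Q \<noteq> 0"
    using Q(2,3) by simp
  note integrable = integrable_uniform_measure_indicator_mult[OF Q(1) U_nonzero X(1), folded U_def]
    integrable_uniform_measure_indicator_mult[OF Q(1) U_nonzero \<Phi>X, folded U_def]
  note measurable = borel_measurable_continuous_on_indicator[OF Q_sets X(1), simplified]
    borel_measurable_continuous_on_indicator[OF Q_sets \<Phi>X, simplified]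
  have average: "(\<integral>\<^sup>+w. indicator Q w * ennreal (Z w) \<partial>lborel)
      = ennreal (\<mu> * U.expectation (\<lambda>w. indicator Q w * Z w))"
    if "integrable U (\<lambda>w. indicator Q w * Z w)" "\<And>w. w \<in> Q \<Longrightarrow> 0 \<le> Z w"
      "(\<lambda>w. indicator Q w * Z w) \<in> borel_measurable borel" for Z
    unfolding U_def using Q(2,3) Q_sets that
    by (intro nn_integral_indicator_eq_measure_mult_integral) (auto simp: U_def)
  define E where "E = U.expectation (\<lambda>w. indicator Q w * X w)"
  have \<Phi>_indicator: "\<Phi> (indicator Q w * X w) = indicator Q w * \<Phi> (X w)" for w
    using growth_function_0[OF gf] by (simp add: indicator_def)
  have nonneg: "0 \<le> indicator Q w * X w" for w
    using X(2) by (simp add: indicator_def)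
  show ?thesis
  proof
    show "E \<ge> 0"
      unfolding E_def using nonneg by (simp add: Bochner_Integration.integral_nonneg)
    show "(\<integral>\<^sup>+w. indicator Q w * ennreal (X w) \<partial>lborel) = ennreal (\<mu> * E)"
      unfolding E_def using X(2) by (intro average integrable(1) measurable(1))
    have "\<Phi> E \<le> U.expectation (\<lambda>w. indicator Q w * \<Phi> (X w))"
      unfolding E_def \<Phi>_indicator[symmetric] using nonneg integrable
      by (intro U.growth_function_Jensen[OF gf cv]) (simp_all add: \<Phi>_indicator)
    then have "ennreal (\<mu> * \<Phi> E) \<le> ennreal (\<mu> * U.expectation (\<lambda>w. indicator Q w * \<Phi> (X w)))"
      using \<open>E \<ge> 0\<close> Q(3) by (intro ennreal_leI mult_left_mono) auto
    also have "\<dots> = (\<integral>\<^sup>+w. indicator Q w * ennreal (\<Phi> (X w)) \<partial>lborel)"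
      using X(2) growth_function_nonneg[OF gf]
      by (intro average[symmetric] integrable(2) measurable(2)) auto
    finally show "ennreal (\<mu> * \<Phi> E) \<le> (\<integral>\<^sup>+w. indicator Q w * ennreal (\<Phi> (X w)) \<partial>lborel)" .
  qed
qed

lemma convex_growth_function_sub_mean_value:
  assumes gf: "growth_function \<Phi>" and cv: "convex_on {0..} \<Phi>"
    and holo: "F holomorphic_on square z r" and r: "r > 0"
  shows "ennreal (4 * r\<^sup>2 * \<Phi> (pi / 32 * cmod (F z)))
           \<le> (\<integral>\<^sup>+w. indicator (square z r) w * ennreal (\<Phi> (cmod (F w))) \<partial>lborel)"
proof -
  have cont: "continuous_on (square z r) (\<lambda>w. cmod (F w))"
    using holo holomorphic_on_imp_continuous_on continuous_on_norm by blast
  obtain E where E: "E \<ge> 0"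
    "(\<integral>\<^sup>+w. indicator (square z r) w * ennreal (cmod (F w)) \<partial>lborel) = ennreal (4 * r\<^sup>2 * E)"
    "ennreal (4 * r\<^sup>2 * \<Phi> E) \<le> (\<integral>\<^sup>+w. indicator (square z r) w * ennreal (\<Phi> (cmod (F w))) \<partial>lborel)"
    by (rule Jensen_growth_function_set_nn_integral[OF gf cv compact_square
          emeasure_square[OF less_imp_le[OF r]] _ cont]) (use r in auto)
  have "pi * r\<^sup>2 * cmod (F z) \<le> 8 * (4 * r\<^sup>2 * E)"
    using E r by (intro norm_le_square_integral[OF holo r]) auto
  then have "pi / 32 * cmod (F z) \<le> E"
    using r by (simp add: field_simps power2_eq_square)
  then have "\<Phi> (pi / 32 * cmod (F z)) \<le> \<Phi> E"
    by (intro growth_function_mono[OF gf]) auto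
  then have "ennreal (4 * r\<^sup>2 * \<Phi> (pi / 32 * cmod (F z))) \<le> ennreal (4 * r\<^sup>2 * \<Phi> E)"
    by (intro ennreal_leI mult_left_mono) auto
  also note E(3)
  finally show ?thesis .
qed

section \<open>The Orlicz modular on the upper half plane\<close>

lemma open_upper_half_plane: "open upper_half_plane"
  unfolding upper_half_plane_def by (simp add: open_halfspace_Im_gt)

lemma orlicz_integrand_measurable:
  assumes "continuous_on upper_half_plane F" and "growth_function \<Phi>"
  shows "(\<lambda>z. indicator upper_half_plane z * ennreal (\<Phi> (cmod (F z)) * Im z powr \<alpha>)) \<in> borel_measurable borel"
proof -
  have "continuous_on {0..} \<Phi>"
    using assms(2) by (simp add: growth_function_def)
  then have "continuous_on upper_half_plane (\<lambda>z. \<Phi> (cmod (F z)))"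
    using continuous_on_norm[OF assms(1)] by (rule continuous_on_compose2) auto
  then have "continuous_on upper_half_plane (\<lambda>z. \<Phi> (cmod (F z)) * Im z powr \<alpha>)"
    by (intro continuous_intros) (auto simp: upper_half_plane_def)
  then show ?thesis
    using open_upper_half_plane by (intro borel_measurable_indicator_mult_ennreal) auto
qed

lemma orlicz_modular_cmult_le:
  assumes "continuous_on upper_half_plane F" and "growth_function \<Phi>" and "c \<ge> 0"
    and "\<And>z. z \<in> upper_half_plane \<Longrightarrow> \<Phi> (cmod (G z)) \<le> c * \<Phi> (cmod (F z))"
  shows "orlicz_modular \<Phi> \<alpha> G \<le> ennreal c * orlicz_modular \<Phi> \<alpha> F"
proof -
  have "\<Phi> (cmod (G z)) * Im z powr \<alpha> \<le> c * (\<Phi> (cmod (F z)) * Im z powr \<alpha>)" if "z \<in> upper_half_plane" for z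
    using mult_right_mono[OF assms(4)[OF that], of "Im z powr \<alpha>"] by (simp add: mult.assoc)
  then have "orlicz_modular \<Phi> \<alpha> G
      \<le> (\<integral>\<^sup>+z. ennreal c * (indicator upper_half_plane z * ennreal (\<Phi> (cmod (F z)) * Im z powr \<alpha>)) \<partial>lborel)"
    unfolding orlicz_modular_def
    using assms(3) growth_function_nonneg[OF assms(2)]
    by (intro nn_integral_mono) (auto simp: ennreal_mult[symmetric] intro!: ennreal_leI split: split_indicator)
  also have "\<dots> = ennreal c * orlicz_modular \<Phi> \<alpha> F"
    unfolding orlicz_modular_def using orlicz_integrand_measurable[OF assms(1,2)]
    by (intro nn_integral_cmult) simp
  finally show ?thesis .
qed

lemma orlicz_modular_divide_le_1:
  assumes gf: "growth_function \<Phi>" and cv: "convex_on {0..} \<Phi>" and f: "f \<in> bergman_orlicz \<Phi> \<alpha>"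
  shows "\<exists>r>0. orlicz_modular \<Phi> \<alpha> (\<lambda>z. f z / of_real r) \<le> 1"
proof -
  have cont: "continuous_on upper_half_plane f"
    using f holomorphic_on_imp_continuous_on by (auto simp: bergman_orlicz_def)
  obtain k where k: "orlicz_modular \<Phi> \<alpha> f = ennreal k" "k \<ge> 0"
    using f by (cases "orlicz_modular \<Phi> \<alpha> f" rule: ennreal_cases) (auto simp: bergman_orlicz_def)
  define r where "r = k + 1"
  have r: "r > 0" "r \<ge> 1"
    using k by (auto simp: r_def)
  have "orlicz_modular \<Phi> \<alpha> (\<lambda>z. f z / of_real r) \<le> ennreal (1 / r) * orlicz_modular \<Phi> \<alpha> f"
    using r convex_on_scale_le[OF cv growth_function_0[OF gf], of "1 / r"]
    by (intro orlicz_modular_cmult_le[OF cont gf]) (auto simp: norm_divide)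
  also have "\<dots> \<le> 1"
    using k r by (simp add: r_def ennreal_mult[symmetric])
  finally show ?thesis
    using r by blast
qed

definition weight_lower :: "real \<Rightarrow> real" where
  "weight_lower \<alpha> = min ((1 / 2) powr \<alpha>) ((3 / 2) powr \<alpha>)"

lemma weight_lower_pos: "weight_lower \<alpha> > 0"
  by (simp add: weight_lower_def)

lemma weight_lower_le_powr:
  fixes y w :: real
  assumes "y > 0" "y / 2 \<le> w" "w \<le> 3 * y / 2"
  shows "weight_lower \<alpha> * y powr \<alpha> \<le> w powr \<alpha>"
proof -
  define s where "s = w / y"
  have s: "1 / 2 \<le> s" "s \<le> 3 / 2" "w = s * y"
    using assms by (auto simp: s_def field_simps)
  have "weight_lower \<alpha> \<le> s powr \<alpha>"
  proof (cases "\<alpha> \<ge> 0")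
    case True
    then have "(1 / 2) powr \<alpha> \<le> s powr \<alpha>"
      using s by (intro powr_mono2) auto
    then show ?thesis
      by (simp add: weight_lower_def)
  next
    case False
    then have "(3 / 2) powr \<alpha> \<le> s powr \<alpha>"
      using s by (intro powr_mono2') auto
    then show ?thesis
      by (simp add: weight_lower_def)
  qed
  then show ?thesis
    using s assms(1) by (simp add: powr_mult mult_right_mono)
qed

lemma square_nn_integral_le_orlicz_modular:
  assumes gf: "growth_function \<Phi>" and cont: "continuous_on upper_half_plane F"
    and z: "z \<in> upper_half_plane"
  shows "(\<integral>\<^sup>+w. indicator (square z (Im z / 2)) w * ennreal (\<Phi> (cmod (F w))) \<partial>lborel)
           \<le> ennreal (1 / (weight_lower \<alpha> * Im z powr \<alpha>)) * orlicz_modular \<Phi> \<alpha> F"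
proof -
  define c where "c = 1 / (weight_lower \<alpha> * Im z powr \<alpha>)"
  have y: "Im z > 0"
    using z by (simp add: upper_half_plane_def)
  have "indicator (square z (Im z / 2)) w * ennreal (\<Phi> (cmod (F w)))
      \<le> ennreal c * (indicator upper_half_plane w * ennreal (\<Phi> (cmod (F w)) * Im w powr \<alpha>))" for w
  proof (cases "w \<in> square z (Im z / 2)")
    case True
    then have "Im z / 2 \<le> Im w" "Im w \<le> 3 * Im z / 2"
      unfolding mem_square_iff abs_le_iff by auto
    then have lower: "weight_lower \<alpha> * Im z powr \<alpha> \<le> Im w powr \<alpha>" and "w \<in> upper_half_plane"
      using y by (auto simp: upper_half_plane_def intro!: weight_lower_le_powr)
    have "\<Phi> (cmod (F w)) \<le> c * (\<Phi> (cmod (F w)) * Im w powr \<alpha>)"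
      using mult_right_mono[OF lower growth_function_nonneg[OF gf norm_ge_zero[of "F w"]]] y
        weight_lower_pos[of \<alpha>]
      by (simp add: c_def field_simps)
    then show ?thesis
      using True \<open>w \<in> upper_half_plane\<close> y growth_function_nonneg[OF gf] weight_lower_pos[of \<alpha>]
      by (simp add: ennreal_mult[symmetric] c_def ennreal_leI)
  qed simp
  then have "(\<integral>\<^sup>+w. indicator (square z (Im z / 2)) w * ennreal (\<Phi> (cmod (F w))) \<partial>lborel)
      \<le> (\<integral>\<^sup>+w. ennreal c * (indicator upper_half_plane w * ennreal (\<Phi> (cmod (F w)) * Im w powr \<alpha>)) \<partial>lborel)"
    by (intro nn_integral_mono)
  also have "\<dots> = ennreal c * orlicz_modular \<Phi> \<alpha> F"
    unfolding orlicz_modular_def using orlicz_integrand_measurable[OF cont gf]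
    by (intro nn_integral_cmult) simp
  finally show ?thesis
    by (simp add: c_def)
qed

lemma orlicz_pointwise_bound:
  assumes gf: "growth_function \<Phi>" and cv: "convex_on {0..} \<Phi>"
    and holo: "f holomorphic_on upper_half_plane" and r: "r > 0"
    and modular: "orlicz_modular \<Phi> \<alpha> (\<lambda>z. f z / of_real r) \<le> 1"
    and z: "z \<in> upper_half_plane"
  shows "cmod (f z) \<le> 32 / (pi * min (weight_lower \<alpha>) 1) * growth_inv \<Phi> (1 / Im z powr (\<alpha> + 2)) * r"
proof -
  define F where "F w = f w / of_real r" for w
  define t where "t = 1 / Im z powr (\<alpha> + 2)"
  define \<kappa> where "\<kappa> = min (weight_lower \<alpha>) 1"
  have y: "Im z > 0"
    using z by (simp add: upper_half_plane_def)
  have \<kappa>: "0 < \<kappa>" "\<kappa> \<le> 1" "\<kappa> \<le> weight_lower \<alpha>"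
    using weight_lower_pos[of \<alpha>] by (auto simp: \<kappa>_def)
  have holo_F: "F holomorphic_on upper_half_plane"
    unfolding F_def using holo by (intro holomorphic_intros) auto
  have "square z (Im z / 2) \<subseteq> upper_half_plane"
    using y unfolding subset_iff mem_square_iff abs_le_iff by (auto simp: upper_half_plane_def)
  then have "ennreal ((Im z)\<^sup>2 * \<Phi> (pi / 32 * cmod (F z)))
      \<le> (\<integral>\<^sup>+w. indicator (square z (Im z / 2)) w * ennreal (\<Phi> (cmod (F w))) \<partial>lborel)"
    using convex_growth_function_sub_mean_value[OF gf cv holomorphic_on_subset[OF holo_F], of z "Im z / 2"] y
    by (simp add: power_divide)
  also have "\<dots> \<le> ennreal (1 / (weight_lower \<alpha> * Im z powr \<alpha>)) * orlicz_modular \<Phi> \<alpha> F"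
    using holo_F holomorphic_on_imp_continuous_on z
    by (intro square_nn_integral_le_orlicz_modular[OF gf]) auto
  also have "\<dots> \<le> ennreal (1 / (weight_lower \<alpha> * Im z powr \<alpha>))"
    using modular mult_left_mono[of _ 1] by (fastforce simp: F_def[abs_def])
  finally have sub_mean: "\<Phi> (pi / 32 * cmod (F z)) \<le> t / weight_lower \<alpha>"
    using y weight_lower_pos[of \<alpha>]
    by (simp add: ennreal_le_iff t_def powr_add field_simps power2_eq_square)
  have "\<Phi> (\<kappa> * (pi / 32 * cmod (F z))) \<le> \<kappa> * \<Phi> (pi / 32 * cmod (F z))"
    using \<kappa> by (intro convex_on_scale_le[OF cv growth_function_0[OF gf]]) auto
  also have "\<dots> \<le> \<kappa> * (t / weight_lower \<alpha>)"
    using \<kappa> sub_mean by (intro mult_left_mono) auto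
  also have "\<dots> \<le> t"
    using \<kappa> y weight_lower_pos[of \<alpha>] by (simp add: t_def field_simps)
  finally have "\<kappa> * (pi / 32 * cmod (F z)) \<le> growth_inv \<Phi> t"
    using \<kappa> y by (intro le_growth_inv[OF gf cv]) (auto simp: t_def)
  then show ?thesis
    using \<kappa> r by (simp add: F_def t_def \<kappa>_def norm_divide field_simps)
qed

lemma le_mult_Inf:
  fixes S :: "real set"
  assumes "S \<noteq> {}" "\<And>r. r \<in> S \<Longrightarrow> 0 \<le> r" "c \<ge> 0" "\<And>r. r \<in> S \<Longrightarrow> a \<le> c * r"
  shows "a \<le> c * Inf S"
proof (cases "c = 0")
  case True
  then show ?thesis
    using assms(1,4) by auto
next
  case False
  then have "a / c \<le> Inf S"
    using assms by (intro cInf_greatest) (auto simp: divide_le_eq mult.commute)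
  then show ?thesis
    using False assms(3) by (simp add: divide_le_eq mult.commute)
qed

theorem lemma3p10:
  fixes \<alpha> :: real
  assumes "\<alpha> > -1"
  shows "\<exists>C>0. \<forall>\<Phi> f z. growth_function \<Phi> \<and> convex_on {0..} \<Phi> \<and>
            f \<in> bergman_orlicz \<Phi> \<alpha> \<and> z \<in> upper_half_plane \<longrightarrow>
            cmod (f z) \<le> C * growth_inv \<Phi> (1 / (Im z) powr (\<alpha> + 2)) * lux_norm \<Phi> \<alpha> f"
proof -
  define C where "C = 32 / (pi * min (weight_lower \<alpha>) 1)"
  have "cmod (f z) \<le> C * growth_inv \<Phi> (1 / (Im z) powr (\<alpha> + 2)) * lux_norm \<Phi> \<alpha> f"
    if gf: "growth_function \<Phi>" and cv: "convex_on {0..} \<Phi>"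
      and f: "f \<in> bergman_orlicz \<Phi> \<alpha>" and z: "z \<in> upper_half_plane" for \<Phi> f z
    unfolding lux_norm_def mult.assoc[symmetric]
  proof (rule le_mult_Inf)
    show "{r. r > 0 \<and> orlicz_modular \<Phi> \<alpha> (\<lambda>z. f z / of_real r) \<le> 1} \<noteq> {}"
      using orlicz_modular_divide_le_1[OF gf cv f] by auto
    show "0 \<le> C * growth_inv \<Phi> (1 / Im z powr (\<alpha> + 2))"
      using growth_inv_nonneg[OF gf] weight_lower_pos[of \<alpha>] by (simp add: C_def)
    show "cmod (f z) \<le> C * growth_inv \<Phi> (1 / Im z powr (\<alpha> + 2)) * r"
      if "r \<in> {r. r > 0 \<and> orlicz_modular \<Phi> \<alpha> (\<lambda>z. f z / of_real r) \<le> 1}" for r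
      using that f z orlicz_pointwise_bound[OF gf cv] by (auto simp: C_def bergman_orlicz_def)
  qed auto
  moreover have "C > 0"
    using weight_lower_pos[of \<alpha>] by (simp add: C_def)
  ultimately show ?thesis
    by blast
qed

end
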